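(* Let $n\ge 1$, $A\in\mathbb{R}^{n\times n}$ and $C\in\mathbb{R}^{1\times n}$, with $(A,C)$ an observable pair and all eigenvalues of $A$ nonzero. Let $t_1,\ldots,t_n$ be nonnegative integers such that the matrix with rows $CA^{t_1},\ldots,CA^{t_n}$ has rank less than $n$. Then for every positive integer $\Delta$ that is not a pathological sampling period of $A$, the matrix with rows $CA^{t_1},\ldots,CA^{t_n},CA^{t_1+\Delta},\ldots,CA^{t_n+\Delta}$ has strictly larger rank than the matrix with rows $CA^{t_1},\ldots,CA^{t_n}$.
   Context: Setting: discrete-time single-output system $x(t+1)=Ax(t)+Bu(t)$, $y(t)=Cx(t)+Du(t)$ with output measured at selected time instances; matrices with rows $CA^{t_i}$ are sample-based observability matrices. $(A,C)$ observable means the matrix with rows $C,CA,\ldots,CA^{n-1}$ has rank $n$. A positive integer $h$ is a pathological sampling period of $A$ if there exist two distinct eigenvalues $\lambda_p\neq\lambda_q$ of $A$ in different Jordan blocks with $\lambda_p^h=\lambda_q^h$. *)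

theory Defs
  imports "Jordan_Normal_Form.DL_Rank" "Jordan_Normal_Form.Char_Poly"
begin

(* rank of a real matrix with m rows: dimension of its column space in R^m
   (= row rank) *)
abbreviation mrank :: "nat \<Rightarrow> real mat \<Rightarrow> nat" where
  "mrank m M \<equiv> vec_space.rank m M"

definition out_row :: "real mat \<Rightarrow> real mat \<Rightarrow> nat \<Rightarrow> real vec" where
  "out_row C A t = row (C * A ^\<^sub>m t) 0"

definition sample_obs_mat :: "nat \<Rightarrow> real mat \<Rightarrow> real mat \<Rightarrow> nat list \<Rightarrow> real mat" where
  "sample_obs_mat n C A ts = mat_of_rows n (map (out_row C A) ts)"

definition observable :: "nat \<Rightarrow> real mat \<Rightarrow> real mat \<Rightarrow> bool" where
  "observable n A C \<longleftrightarrow> mrank n (sample_obs_mat n C A [0..<n]) = n"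

definition ceigenvalue :: "real mat \<Rightarrow> complex \<Rightarrow> bool" where
  "ceigenvalue A lam \<longleftrightarrow> eigenvalue (map_mat complex_of_real A) lam"

definition pathological :: "real mat \<Rightarrow> nat \<Rightarrow> bool" where
  "pathological A h \<longleftrightarrow> h > 0 \<and>
     (\<exists>p q. ceigenvalue A p \<and> ceigenvalue A q \<and> p \<noteq> q \<and> p ^ h = q ^ h)"

end

theory Submission
  imports Defs
begin

(* If stacking the shifted rows does not increase the rank, every vector annihilated by the rows
   C A^t_i is also annihilated by the rows C A^(t_i + Delta) = C A^t_i A^Delta, so the complexified
   kernel K of the first block is A^Delta-invariant.  K is nonzero (rank < n), so it contains an
   eigenvector y of A^Delta, whose eigenvalue mu is nonzero because A is invertible.  Since Delta is
   not pathological and x^Delta - mu has simple roots, y is already an eigenvector of A, with some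
   eigenvalue lambda <> 0.  Then 0 = C A^t_1 y = lambda^t_1 C y gives C y = 0, which contradicts
   observability (the Popov-Belevitch-Hautus test). *)

lemma pow_mat_add:
  assumes "(A :: 'a :: semiring_1 mat) \<in> carrier_mat n n"
  shows "A ^\<^sub>m (a + b) = A ^\<^sub>m a * A ^\<^sub>m b"
proof (induction b)
  case (Suc b)
  then show ?case
    using assms by (simp add: assoc_mult_mat[of _ n n _ n _ n])
qed (use assms in simp)

lemma pow_mat_Suc_mult_vec:
  assumes "A \<in> carrier_mat n n" and "v \<in> carrier_vec n"
  shows "A ^\<^sub>m Suc k *\<^sub>v v = A *\<^sub>v (A ^\<^sub>m k *\<^sub>v v)"
  using pow_mat_add[OF assms(1), of 1 k] assms by (simp add: assoc_mult_mat_vec[of _ n n _ n])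

lemma mult_mat_vec_zero [simp]: "A \<in> carrier_mat m n \<Longrightarrow> A *\<^sub>v 0\<^sub>v n = 0\<^sub>v m"
  by (intro eq_vecI) auto

lemma smult_zero_vec [simp]: "(c :: 'a :: mult_zero) \<cdot>\<^sub>v 0\<^sub>v n = 0\<^sub>v n"
  by (intro eq_vecI) auto

lemma zero_smult_vec [simp]: "(0 :: 'a :: mult_zero) \<cdot>\<^sub>v v = 0\<^sub>v (dim_vec v)"
  by (intro eq_vecI) auto

lemma diff_vec_eq_zero_iff:
  assumes "(v :: 'a :: group_add vec) \<in> carrier_vec n" and "w \<in> carrier_vec n"
  shows "v - w = 0\<^sub>v n \<longleftrightarrow> v = w"
  using assms by (auto simp: vec_eq_iff)

lemma smult_vec_eq_zero_iff:
  assumes "v \<in> carrier_vec n"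
  shows "c \<cdot>\<^sub>v v = 0\<^sub>v n \<longleftrightarrow> c = (0 :: 'a :: field) \<or> v = 0\<^sub>v n"
  using assms by (auto simp: vec_eq_iff)

(* p(B) v, evaluated by Horner's scheme *)
definition poly_mat_vec :: "'a :: comm_ring_1 mat \<Rightarrow> 'a poly \<Rightarrow> 'a vec \<Rightarrow> 'a vec" where
  "poly_mat_vec B p v = foldr (\<lambda>a w. a \<cdot>\<^sub>v v + B *\<^sub>v w) (coeffs p) (0\<^sub>v (dim_row B))"

context
  fixes B :: "'a :: field mat" and n :: nat
  assumes B: "B \<in> carrier_mat n n"
begin

lemma poly_mat_vec_0 [simp]: "poly_mat_vec B 0 v = 0\<^sub>v n"
  using B by (simp add: poly_mat_vec_def)

lemma poly_mat_vec_pCons: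
  assumes "v \<in> carrier_vec n"
  shows "poly_mat_vec B (pCons a p) v = a \<cdot>\<^sub>v v + B *\<^sub>v poly_mat_vec B p v"
proof (cases "a = 0 \<and> p = 0")
  case True
  then show ?thesis using B assms by (auto simp: poly_mat_vec_def)
next
  case False
  then show ?thesis by (auto simp: poly_mat_vec_def cCons_def)
qed

lemma poly_mat_vec_carrier [simp]:
  "v \<in> carrier_vec n \<Longrightarrow> poly_mat_vec B p v \<in> carrier_vec n"
  by (induction p) (use B in \<open>simp_all add: poly_mat_vec_pCons\<close>)

lemma poly_mat_vec_dim [simp]:
  "v \<in> carrier_vec n \<Longrightarrow> dim_vec (poly_mat_vec B p v) = n"
  by (rule carrier_vecD[OF poly_mat_vec_carrier])

lemma poly_mat_vec_add:
  assumes "v \<in> carrier_vec n"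
  shows "poly_mat_vec B (p + q) v = poly_mat_vec B p v + poly_mat_vec B q v"
proof (induction p arbitrary: q)
  case 0
  then show ?case using assms by simp
next
  case (pCons a p)
  show ?case
  proof (cases q)
    case (pCons b q')
    have "poly_mat_vec B (pCons a p + q) v
        = (a \<cdot>\<^sub>v v + b \<cdot>\<^sub>v v) + B *\<^sub>v (poly_mat_vec B p v + poly_mat_vec B q' v)"
      using pCons.IH assms by (simp add: pCons poly_mat_vec_pCons add_smult_distrib_vec)
    also have "\<dots> = poly_mat_vec B (pCons a p) v + poly_mat_vec B q v"
      using B assms
      by (intro eq_vecI) (simp_all add: pCons poly_mat_vec_pCons mult_add_distrib_mat_vec[of _ n n])
    finally show ?thesis .
  qed
qed

lemma poly_mat_vec_smult:
  assumes "v \<in> carrier_vec n"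
  shows "poly_mat_vec B (smult c p) v = c \<cdot>\<^sub>v poly_mat_vec B p v"
  by (induction p)
    (use B assms in \<open>simp_all add: poly_mat_vec_pCons smult_add_distrib_vec mult_mat_vec
        smult_smult_assoc\<close>)

lemma poly_mat_vec_mult:
  assumes "v \<in> carrier_vec n"
  shows "poly_mat_vec B (p * q) v = poly_mat_vec B p (poly_mat_vec B q v)"
proof (induction p)
  case (pCons a p)
  then show ?case
    using B assms by (simp add: poly_mat_vec_add poly_mat_vec_smult poly_mat_vec_pCons)
qed (use assms in simp)

lemma poly_mat_vec_const [simp]:
  "v \<in> carrier_vec n \<Longrightarrow> poly_mat_vec B [:c:] v = c \<cdot>\<^sub>v v"
  using B by (simp add: poly_mat_vec_pCons)

lemma poly_mat_vec_1 [simp]: "v \<in> carrier_vec n \<Longrightarrow> poly_mat_vec B 1 v = v"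
  by (simp add: one_pCons)

lemma poly_mat_vec_linear_factor:
  "v \<in> carrier_vec n \<Longrightarrow> poly_mat_vec B [:-a, 1:] v = B *\<^sub>v v - a \<cdot>\<^sub>v v"
  using B by (intro eq_vecI) (simp_all add: poly_mat_vec_pCons)

lemma poly_mat_vec_monom:
  "v \<in> carrier_vec n \<Longrightarrow> poly_mat_vec B (monom c k) v = c \<cdot>\<^sub>v (B ^\<^sub>m k *\<^sub>v v)"
proof (induction k)
  case (Suc k)
  have w: "B ^\<^sub>m k *\<^sub>v v \<in> carrier_vec n"
    using mult_mat_vec_carrier[OF pow_carrier_mat[OF B] Suc.prems] .
  have "poly_mat_vec B (monom c (Suc k)) v = B *\<^sub>v (c \<cdot>\<^sub>v (B ^\<^sub>m k *\<^sub>v v))"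
    using Suc B w by (simp add: monom_Suc poly_mat_vec_pCons mult_mat_vec_carrier[OF B])
  also have "\<dots> = c \<cdot>\<^sub>v (B ^\<^sub>m Suc k *\<^sub>v v)"
    unfolding pow_mat_Suc_mult_vec[OF B Suc.prems] mult_mat_vec[OF B w] ..
  finally show ?case .
qed (use B in \<open>simp add: monom_0\<close>)

lemma poly_mat_vec_sum_index:
  assumes "v \<in> carrier_vec n" and "finite J" and "i < n"
  shows "poly_mat_vec B (\<Sum>j\<in>J. f j) v $ i = (\<Sum>j\<in>J. poly_mat_vec B (f j) v $ i)"
  using assms(2) by induction (use assms in \<open>simp_all add: poly_mat_vec_add\<close>)

lemma poly_mat_vec_invariant_kernel:
  assumes M: "M \<in> carrier_mat m n" and v: "v \<in> carrier_vec n" "M *\<^sub>v v = 0\<^sub>v m"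
    and inv: "\<And>w. w \<in> carrier_vec n \<Longrightarrow> M *\<^sub>v w = 0\<^sub>v m \<Longrightarrow> M *\<^sub>v (B *\<^sub>v w) = 0\<^sub>v m"
  shows "M *\<^sub>v poly_mat_vec B p v = 0\<^sub>v m"
proof (induction p)
  case (pCons a p)
  then show ?case
    using B M v inv[of "poly_mat_vec B p v"]
    by (simp add: poly_mat_vec_pCons mult_add_distrib_mat_vec[of _ m n] mult_mat_vec)
qed (use M in simp)

lemma krylov_annihilator_exists:
  assumes v: "v \<in> carrier_vec n"
  obtains p where "p \<noteq> 0" and "poly_mat_vec B p v = 0\<^sub>v n"
proof -
  (* the n + 1 vectors B^j v, padded by a zero row, are the columns of a singular square matrix *)
  define K where "K = mat\<^sub>r (Suc n) (Suc n)
    (\<lambda>i. if i = n then 0\<^sub>v (Suc n) else vec (Suc n) (\<lambda>j. (B ^\<^sub>m j *\<^sub>v v) $ i))"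
  have K: "K \<in> carrier_mat (Suc n) (Suc n)"
    by (simp add: K_def)
  have "det K = 0"
    unfolding K_def by (rule det_row_0) auto
  then obtain c where c: "c \<in> carrier_vec (Suc n)" "c \<noteq> 0\<^sub>v (Suc n)" "K *\<^sub>v c = 0\<^sub>v (Suc n)"
    using det_0_iff_vec_prod_zero[OF K] by blast
  define p where "p = (\<Sum>j<Suc n. monom (c $ j) j)"
  have coeff_p: "coeff p j = c $ j" if "j < Suc n" for j
    using that by (simp add: p_def coeff_sum)
  show thesis
  proof
    have "\<not> (\<forall>j<Suc n. c $ j = 0)"
    proof
      assume "\<forall>j<Suc n. c $ j = 0"
      then have "c = 0\<^sub>v (Suc n)"
        using c(1) by (intro eq_vecI) auto
      with c(2) show False ..
    qed
    then show "p \<noteq> 0"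
      using coeff_p by (metis coeff_0)
    show "poly_mat_vec B p v = 0\<^sub>v n"
    proof (rule eq_vecI)
      fix i assume "i < dim_vec (0\<^sub>v n :: 'a vec)"
      then have i: "i < n" by simp
      have "poly_mat_vec B p v $ i = (\<Sum>j<Suc n. c $ j * (B ^\<^sub>m j *\<^sub>v v) $ i)"
        unfolding p_def poly_mat_vec_sum_index[OF v finite_lessThan i]
        using B i v by (simp add: poly_mat_vec_monom del: sum.lessThan_Suc)
      also have "\<dots> = vec (Suc n) (\<lambda>j. (B ^\<^sub>m j *\<^sub>v v) $ i) \<bullet> c"
        using c(1) by (simp add: scalar_prod_def lessThan_atLeast0 mult.commute)
      also have "\<dots> = (K *\<^sub>v c) $ i"
        using i by (simp add: K_def)
      finally show "poly_mat_vec B p v $ i = 0\<^sub>v n $ i"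
        using c(3) i by simp
    qed (use v in simp)
  qed
qed

lemma eigenvector_of_annihilating_linear_factors:
  assumes v: "v \<in> carrier_vec n" "v \<noteq> 0\<^sub>v n"
    and "poly_mat_vec B (\<Prod>a\<leftarrow>as. [:-a, 1:]) v = 0\<^sub>v n"
  shows "\<exists>q a. a \<in> set as \<and> eigenvector B (poly_mat_vec B q v) a"
  using assms(3)
proof (induction as)
  case Nil
  with v show ?case
    by simp
next
  case (Cons a as)
  define w where "w = poly_mat_vec B (\<Prod>a\<leftarrow>as. [:-a, 1:]) v"
  have w: "w \<in> carrier_vec n"
    using v by (simp add: w_def)
  show ?case
  proof (cases "w = 0\<^sub>v n")
    case True
    with Cons.IH show ?thesis
      unfolding w_def by auto
  next
    case False
    have "poly_mat_vec B [:-a, 1:] w = 0\<^sub>v n"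
      using Cons.prems unfolding w_def list.map prod_list.Cons poly_mat_vec_mult[OF v(1)] .
    then have "B *\<^sub>v w - a \<cdot>\<^sub>v w = 0\<^sub>v n"
      using w by (simp add: poly_mat_vec_linear_factor)
    then have "B *\<^sub>v w = a \<cdot>\<^sub>v w"
      using B w by (simp add: diff_vec_eq_zero_iff)
    then have "eigenvector B w a"
      using B w False by (simp add: eigenvector_def)
    then show ?thesis
      unfolding w_def by auto
  qed
qed

end

lemma eigenvector_of_annihilating_poly:
  fixes B :: "complex mat"
  assumes B: "B \<in> carrier_mat n n" and v: "v \<in> carrier_vec n" "v \<noteq> 0\<^sub>v n"
    and p: "p \<noteq> 0" "poly_mat_vec B p v = 0\<^sub>v n"
  obtains q a where "poly p a = 0" and "eigenvector B (poly_mat_vec B q v) a"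
proof -
  obtain as where p_eq: "smult (lead_coeff p) (\<Prod>a\<leftarrow>as. [:-a, 1:]) = p"
    using fundamental_theorem_algebra_factorized[of p] by blast
  have "poly_mat_vec B (smult (lead_coeff p) (\<Prod>a\<leftarrow>as. [:-a, 1:])) v = 0\<^sub>v n"
    using p(2) by (simp only: p_eq)
  then have "lead_coeff p \<cdot>\<^sub>v poly_mat_vec B (\<Prod>a\<leftarrow>as. [:-a, 1:]) v = 0\<^sub>v n"
    using B v by (simp add: poly_mat_vec_smult)
  then have "poly_mat_vec B (\<Prod>a\<leftarrow>as. [:-a, 1:]) v = 0\<^sub>v n"
    using p(1) B v by (simp add: smult_vec_eq_zero_iff)
  then obtain q a where "a \<in> set as" "eigenvector B (poly_mat_vec B q v) a"
    using eigenvector_of_annihilating_linear_factors[OF B v] by blast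
  moreover have "poly (smult (lead_coeff p) (\<Prod>a\<leftarrow>as. [:-a, 1:])) a = 0"
    using \<open>a \<in> set as\<close> by (simp add: poly_prod_list)
  then have "poly p a = 0"
    by (simp only: p_eq)
  ultimately show thesis
    using that by blast
qed

lemma invariant_kernel_eigenvector:
  fixes B M :: "complex mat"
  assumes B: "B \<in> carrier_mat n n" and M: "M \<in> carrier_mat m n"
    and z: "z \<in> carrier_vec n" "z \<noteq> 0\<^sub>v n" "M *\<^sub>v z = 0\<^sub>v m"
    and inv: "\<And>w. w \<in> carrier_vec n \<Longrightarrow> M *\<^sub>v w = 0\<^sub>v m \<Longrightarrow> M *\<^sub>v (B *\<^sub>v w) = 0\<^sub>v m"
  obtains y a where "M *\<^sub>v y = 0\<^sub>v m" and "eigenvector B y a"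
proof -
  obtain p where "p \<noteq> 0" "poly_mat_vec B p z = 0\<^sub>v n"
    using krylov_annihilator_exists[OF B z(1)] .
  then obtain q a where "eigenvector B (poly_mat_vec B q z) a"
    using eigenvector_of_annihilating_poly[OF B z(1,2)] by metis
  moreover have "M *\<^sub>v poly_mat_vec B q z = 0\<^sub>v m"
    using poly_mat_vec_invariant_kernel[OF B M z(1,3) inv] .
  ultimately show thesis
    using that by blast
qed

lemma eigenvector_pow_eigenvalue_nonzero:
  fixes A :: "complex mat"
  assumes A: "A \<in> carrier_mat n n" and "\<not> eigenvalue A 0"
    and y: "eigenvector (A ^\<^sub>m d) y \<mu>"
  shows "\<mu> \<noteq> 0"
proof
  assume "\<mu> = 0"
  have y_car: "y \<in> carrier_vec n" "y \<noteq> 0\<^sub>v n"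
    using y A by (auto simp: eigenvector_def)
  have "poly_mat_vec A (monom 1 d) y = 0\<^sub>v n"
    using y \<open>\<mu> = 0\<close> A y_car by (simp add: poly_mat_vec_monom eigenvector_def)
  moreover have "monom (1 :: complex) d \<noteq> 0"
    by simp
  ultimately obtain q a where "poly (monom 1 d) a = 0" "eigenvector A (poly_mat_vec A q y) a"
    using eigenvector_of_annihilating_poly[OF A y_car] by blast
  then show False
    using assms(2) by (auto simp: poly_monom eigenvalue_def)
qed

lemma monom_minus_const_simple_root:
  fixes a \<mu> :: "'a :: field_char_0"
  assumes "d > 0" and "\<mu> \<noteq> 0" and factor: "monom 1 d - [:\<mu>:] = [:-a, 1:] * r"
  shows "poly r a \<noteq> 0"
proof
  assume "poly r a = 0"
  then have "poly (pderiv (monom 1 d - [:\<mu>:])) a = 0"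
    unfolding factor pderiv_mult by simp
  then have "a = 0"
    using \<open>d > 0\<close> by (simp add: pderiv_diff pderiv_monom poly_monom)
  moreover have "a ^ d = \<mu>"
    using arg_cong[OF factor, of "\<lambda>p. poly p a"] by (simp add: poly_monom)
  ultimately show False
    using assms(1,2) by (simp add: power_0_left)
qed

lemma annihilator_simple_root_eigenvector:
  fixes A :: "complex mat"
  assumes A: "A \<in> carrier_mat n n" and y: "y \<in> carrier_vec n"
    and annihilates: "poly_mat_vec A ([:-a, 1:] * r) y = 0\<^sub>v n" and simple: "poly r a \<noteq> 0"
    and unique: "\<And>b. poly r b = 0 \<Longrightarrow> eigenvalue A b \<Longrightarrow> b = a"
  shows "A *\<^sub>v y = a \<cdot>\<^sub>v y"
proof -
  define u where "u = poly_mat_vec A [:-a, 1:] y"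
  have u: "u \<in> carrier_vec n" and u_eq: "u = A *\<^sub>v y - a \<cdot>\<^sub>v y"
    using A y by (simp_all add: u_def poly_mat_vec_linear_factor)
  have "u = 0\<^sub>v n"
  proof (rule ccontr)
    assume "u \<noteq> 0\<^sub>v n"
    have "poly_mat_vec A r u = poly_mat_vec A (r * [:-a, 1:]) y"
      unfolding u_def by (rule poly_mat_vec_mult[OF A y, symmetric])
    then have "poly_mat_vec A r u = 0\<^sub>v n"
      using annihilates by (simp only: mult.commute)
    moreover have "r \<noteq> 0"
      using simple by auto
    ultimately obtain q b where "poly r b = 0" "eigenvector A (poly_mat_vec A q u) b"
      using eigenvector_of_annihilating_poly[OF A u \<open>u \<noteq> 0\<^sub>v n\<close>] by blast
    with unique have "poly r a = 0"
      unfolding eigenvalue_def by blast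
    with simple show False ..
  qed
  then show ?thesis
    using u_eq A y by (simp add: diff_vec_eq_zero_iff)
qed

lemma eigenvector_of_pow_eigenvector:
  fixes A :: "complex mat"
  assumes A: "A \<in> carrier_mat n n" and "d > 0"
    and y: "eigenvector (A ^\<^sub>m d) y \<mu>" and "\<mu> \<noteq> 0"
    and pow_inj: "\<And>a b. eigenvalue A a \<Longrightarrow> eigenvalue A b \<Longrightarrow> a ^ d = b ^ d \<Longrightarrow> a = b"
  obtains a where "eigenvector A y a"
proof -
  have y_car: "y \<in> carrier_vec n" "y \<noteq> 0\<^sub>v n" and Ay: "A ^\<^sub>m d *\<^sub>v y = \<mu> \<cdot>\<^sub>v y"
    using y A by (auto simp: eigenvector_def)
  define p where "p = monom 1 d - [:\<mu>:]"
  have pow_root: "c ^ d = \<mu>" if "poly p c = 0" for c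
    using that by (simp add: p_def poly_monom)
  have "coeff p d = 1"
    using \<open>d > 0\<close> by (simp add: p_def coeff_pCons')
  then have "p \<noteq> 0"
    by auto
  have p_y: "poly_mat_vec A p y = 0\<^sub>v n"
    unfolding p_def diff_conv_add_uminus
    using A y_car Ay by (intro eq_vecI) (simp_all add: poly_mat_vec_add poly_mat_vec_monom)
  then obtain q a where root: "poly p a = 0" and "eigenvector A (poly_mat_vec A q y) a"
    using eigenvector_of_annihilating_poly[OF A y_car \<open>p \<noteq> 0\<close>] by blast
  then have "eigenvalue A a"
    by (auto simp: eigenvalue_def)
  from root obtain r where r: "p = [:-a, 1:] * r"
    by (auto simp: poly_eq_0_iff_dvd)
  have "A *\<^sub>v y = a \<cdot>\<^sub>v y"
  proof (rule annihilator_simple_root_eigenvector[OF A y_car(1)])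
    show "poly_mat_vec A ([:-a, 1:] * r) y = 0\<^sub>v n"
      using p_y by (simp only: r)
    show "poly r a \<noteq> 0"
      using monom_minus_const_simple_root[OF \<open>d > 0\<close> \<open>\<mu> \<noteq> 0\<close>] r by (simp add: p_def)
    fix b assume "poly r b = 0" "eigenvalue A b"
    then show "b = a"
      using pow_inj[OF _ \<open>eigenvalue A a\<close>] pow_root root r by simp
  qed
  with A y_car show thesis
    using that by (simp add: eigenvector_def)
qed

lemma nonpathological_pow_eigenvector:
  fixes A :: "real mat"
  assumes A: "A \<in> carrier_mat n n" and nonzero: "\<forall>lam. ceigenvalue A lam \<longrightarrow> lam \<noteq> 0"
    and "\<Delta> > 0" and "\<not> pathological A \<Delta>"
    and y: "eigenvector (map_mat complex_of_real A ^\<^sub>m \<Delta>) y \<mu>"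
  obtains a where "a \<noteq> 0" and "eigenvector (map_mat complex_of_real A) y a"
proof -
  let ?Ac = "map_mat complex_of_real A"
  have Ac: "?Ac \<in> carrier_mat n n"
    using A by simp
  have no_zero: "\<not> eigenvalue ?Ac 0"
    using nonzero by (auto simp: ceigenvalue_def)
  have pow_inj: "p = q" if "eigenvalue ?Ac p" "eigenvalue ?Ac q" "p ^ \<Delta> = q ^ \<Delta>" for p q
    using assms(3,4) that by (auto simp: pathological_def ceigenvalue_def)
  obtain a where a: "eigenvector ?Ac y a"
    using eigenvector_of_pow_eigenvector[OF Ac \<open>\<Delta> > 0\<close> y] pow_inj
      eigenvector_pow_eigenvalue_nonzero[OF Ac no_zero y] by blast
  moreover have "a \<noteq> 0"
    using a no_zero by (auto simp: eigenvalue_def)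
  ultimately show thesis
    using that by blast
qed

lemma append_rows_cols_lift:
  fixes A B :: "'a :: field mat"
  assumes A: "A \<in> carrier_mat m nc" and B: "B \<in> carrier_mat m' nc"
  obtains T where "T \<subseteq> set (cols (A @\<^sub>r B))" and "card T = vec_space.rank m A"
    and "\<And>a. (\<And>i. i < m \<Longrightarrow> (\<Sum>v\<in>T. a v * v $ i) = 0) \<Longrightarrow> \<forall>v\<in>T. a v = 0"
proof -
  interpret V: vec_space "TYPE('a)" m .
  let ?P = "\<lambda>T. T \<subseteq> set (cols A) \<and> V.lin_indpt T"
  obtain S where S: "maximal S ?P"
    using maximal_exists[of ?P "card (set (cols A))" "{}"]
    by (meson List.finite_set card_mono empty_iff empty_subsetI V.finite_lin_indpt2 rev_finite_subset)
  then have S_cols: "S \<subseteq> set (cols A)" and S_indpt: "V.lin_indpt S"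
    by (auto simp: maximal_def)
  have S_fin: "finite S"
    using S_cols finite_subset by blast
  have S_car: "S \<subseteq> carrier_vec m"
    using S_cols cols_dim[of A] carrier_matD(1)[OF A] by auto
  have "\<forall>s\<in>S. \<exists>j. j < nc \<and> col A j = s"
    using S_cols A by (fastforce simp: cols_def)
  from bchoice[OF this] obtain J where J: "\<forall>s\<in>S. J s < nc \<and> col A (J s) = s"
    by blast
  define h where "h s = col (A @\<^sub>r B) (J s)" for s
  have h_top: "h s $ i = s $ i" if "s \<in> S" "i < m" for s i
  proof -
    have J_lt: "J s < nc" and col_J: "col A (J s) = s"
      using J that(1) by auto
    have "h s $ i = col A (J s) $ i"
      using J_lt that(2) A B by (simp add: h_def append_rows_def)
    then show ?thesis
      unfolding col_J .
  qed
  have "inj_on h S"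
  proof (rule inj_onI)
    fix s s' assume s: "s \<in> S" "s' \<in> S" "h s = h s'"
    have dim: "dim_vec s = m" "dim_vec s' = m"
      using s(1,2) S_car by auto
    show "s = s'"
    proof (rule eq_vecI)
      fix i assume "i < dim_vec s'"
      then have "i < m"
        using dim by simp
      have "s $ i = h s $ i"
        using h_top[OF s(1) \<open>i < m\<close>] by simp
      also have "\<dots> = s' $ i"
        using h_top[OF s(2) \<open>i < m\<close>] s(3) by simp
      finally show "s $ i = s' $ i" .
    qed (use dim in simp)
  qed
  show thesis
  proof
    show "h ` S \<subseteq> set (cols (A @\<^sub>r B))"
      using J carrier_matD(2)[OF carrier_append_rows[OF A B]] by (auto simp: h_def cols_def)
    show "card (h ` S) = V.rank A"
      using \<open>inj_on h S\<close> V.rank_card_indpt[OF A S] by (simp add: card_image)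
    fix a assume top: "\<And>i. i < m \<Longrightarrow> (\<Sum>v\<in>h ` S. a v * v $ i) = 0"
    have "V.lincomb (a \<circ> h) S = 0\<^sub>v m"
    proof (rule eq_vecI)
      fix i assume "i < dim_vec (0\<^sub>v m :: 'a vec)"
      then have "i < m" by simp
      then show "V.lincomb (a \<circ> h) S $ i = 0\<^sub>v m $ i"
        using top[OF \<open>i < m\<close>] \<open>inj_on h S\<close> h_top S_car by (simp add: V.lincomb_index sum.reindex)
    qed (use V.lincomb_closed[OF S_car] in simp)
    then have "a \<circ> h \<in> S \<rightarrow> {0}"
      using V.not_lindepD[OF S_indpt S_fin subset_refl] by simp
    then show "\<forall>v\<in>h ` S. a v = 0"
      by auto
  qed
qed

lemma rank_append_rows_gt:
  fixes A B :: "'a :: field mat"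
  assumes A: "A \<in> carrier_mat m nc" and B: "B \<in> carrier_mat m' nc"
    and x: "x \<in> carrier_vec nc" "A *\<^sub>v x = 0\<^sub>v m" "B *\<^sub>v x \<noteq> 0\<^sub>v m'"
  shows "vec_space.rank m A < vec_space.rank (m + m') (A @\<^sub>r B)"
proof -
  interpret W: vec_space "TYPE('a)" "m + m'" .
  define AB where "AB = A @\<^sub>r B"
  have AB: "AB \<in> carrier_mat (m + m') nc"
    using A B by (simp add: AB_def)
  obtain T where T_cols: "T \<subseteq> set (cols AB)" and card_T: "card T = vec_space.rank m A"
    and top_zero: "\<And>a. (\<And>i. i < m \<Longrightarrow> (\<Sum>v\<in>T. a v * v $ i) = 0) \<Longrightarrow> \<forall>v\<in>T. a v = 0"
    using append_rows_cols_lift[OF A B] unfolding AB_def by blast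
  (* the top blocks of the columns in T form a basis of the column space of A, so (A @r B) x,
     whose top block A x vanishes, lies outside span T; lying in the column space of A @r B,
     it yields a column of A @r B that extends T *)
  have T_fin: "finite T"
    using T_cols finite_subset by blast
  have T_car: "T \<subseteq> carrier_vec (m + m')"
    using T_cols cols_dim[of AB] carrier_matD(1)[OF AB] by auto
  have coeffs_zero: "\<forall>v\<in>T. a v = 0" if "\<And>i. i < m \<Longrightarrow> W.lincomb a T $ i = 0" for a
    using that W.lincomb_index[OF _ T_car] by (intro top_zero) simp
  have T_indpt: "W.lin_indpt T"
    using coeffs_zero by (intro W.finite_lin_indpt2[OF T_fin T_car]) simp
  have ABx: "AB *\<^sub>v x = (A *\<^sub>v x) @\<^sub>v (B *\<^sub>v x)"
    unfolding AB_def by (rule mat_mult_append[OF A B x(1)])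
  have "AB *\<^sub>v x \<notin> W.span T"
  proof
    assume "AB *\<^sub>v x \<in> W.span T"
    then obtain a where a: "W.lincomb a T = AB *\<^sub>v x"
      using W.finite_in_span[OF T_fin T_car] by blast
    have "\<forall>v\<in>T. a v = 0"
      using x(2) by (intro coeffs_zero) (simp add: a ABx x(1) A B)
    then have "AB *\<^sub>v x = 0\<^sub>v (m + m')"
      using W.lincomb_zero[OF T_car] by (simp flip: a)
    have "B *\<^sub>v x = 0\<^sub>v m'"
    proof (rule eq_vecI)
      fix i assume "i < dim_vec (0\<^sub>v m' :: 'a vec)"
      then have "(AB *\<^sub>v x) $ (m + i) = 0"
        using \<open>AB *\<^sub>v x = 0\<^sub>v (m + m')\<close> by simp
      then show "(B *\<^sub>v x) $ i = 0\<^sub>v m' $ i"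
        using \<open>i < dim_vec (0\<^sub>v m')\<close> A B by (simp add: ABx)
    qed (use B in simp)
    with x(3) show False ..
  qed
  moreover have "AB *\<^sub>v x \<in> W.span (set (cols AB))"
    using W.col_space_eq[OF AB] AB x(1) by (auto simp: W.col_space_def)
  ultimately obtain c where c: "c \<in> set (cols AB)" "c \<notin> W.span T"
    using W.span_subsetI[OF T_car, of "set (cols AB)"] by blast
  have c_car: "c \<in> carrier_vec (m + m')"
    using c(1) cols_dim[of AB] carrier_matD(1)[OF AB] by auto
  have "c \<notin> T"
    using c(2) W.in_own_span[OF T_car] by blast
  have "W.lin_indpt (insert c T)"
    using W.lin_dep_iff_in_span[OF T_car T_indpt c_car \<open>c \<notin> T\<close>] c(2) by simp
  then have "card (insert c T) \<le> W.rank AB"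
    using W.rank_ge_card_indpt[OF AB] T_cols c(1) by blast
  then show ?thesis
    using \<open>c \<notin> T\<close> T_fin card_T by (simp add: AB_def)
qed

lemma of_real_mat_mult_vec_Re_Im:
  fixes X :: "real mat" and z :: "complex vec"
  assumes X: "X \<in> carrier_mat r n" and z: "z \<in> carrier_vec n"
  shows "map_mat complex_of_real X *\<^sub>v z
    = map_vec complex_of_real (X *\<^sub>v map_vec Re z) + \<i> \<cdot>\<^sub>v map_vec complex_of_real (X *\<^sub>v map_vec Im z)"
proof (rule eq_vecI)
  fix i assume "i < dim_vec (map_vec complex_of_real (X *\<^sub>v map_vec Re z)
    + \<i> \<cdot>\<^sub>v map_vec complex_of_real (X *\<^sub>v map_vec Im z))"
  then have i: "i < r"
    using X by simp
  have "(map_mat complex_of_real X *\<^sub>v z) $ i = (\<Sum>j<n. complex_of_real (X $$ (i, j)) * z $ j)"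
    using X z i by (simp add: scalar_prod_def lessThan_atLeast0)
  also have "\<dots> = (\<Sum>j<n. complex_of_real (X $$ (i, j) * Re (z $ j))
      + \<i> * complex_of_real (X $$ (i, j) * Im (z $ j)))"
    by (intro sum.cong refl) (simp add: complex_eq_iff)
  finally show "(map_mat complex_of_real X *\<^sub>v z) $ i = (map_vec complex_of_real (X *\<^sub>v map_vec Re z)
      + \<i> \<cdot>\<^sub>v map_vec complex_of_real (X *\<^sub>v map_vec Im z)) $ i"
    using X z i by (simp add: scalar_prod_def lessThan_atLeast0 sum.distrib sum_distrib_left)
qed (use X in simp)

lemma of_real_mat_kernel_mono:
  fixes X Y :: "real mat"
  assumes X: "X \<in> carrier_mat r n" and Y: "Y \<in> carrier_mat r' n"
    and ker: "\<And>x. x \<in> carrier_vec n \<Longrightarrow> X *\<^sub>v x = 0\<^sub>v r \<Longrightarrow> Y *\<^sub>v x = 0\<^sub>v r'"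
    and z: "z \<in> carrier_vec n" and Xz: "map_mat complex_of_real X *\<^sub>v z = 0\<^sub>v r"
  shows "map_mat complex_of_real Y *\<^sub>v z = 0\<^sub>v r'"
proof -
  have of_real_zero_iff: "map_vec complex_of_real a + \<i> \<cdot>\<^sub>v map_vec complex_of_real b = 0\<^sub>v k
      \<longleftrightarrow> a = 0\<^sub>v k \<and> b = 0\<^sub>v k" if "a \<in> carrier_vec k" "b \<in> carrier_vec k" for a b :: "real vec" and k
    using that by (auto simp: vec_eq_iff complex_eq_iff)
  have "X *\<^sub>v map_vec Re z = 0\<^sub>v r" "X *\<^sub>v map_vec Im z = 0\<^sub>v r"
    using Xz X z by (simp_all add: of_real_mat_mult_vec_Re_Im of_real_zero_iff)
  then have "Y *\<^sub>v map_vec Re z = 0\<^sub>v r'" "Y *\<^sub>v map_vec Im z = 0\<^sub>v r'"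
    using ker z by simp_all
  then show ?thesis
    using Y z by (simp add: of_real_mat_mult_vec_Re_Im of_real_zero_iff)
qed

lemma kernel_invariant_if_rank_not_increased:
  fixes M B :: "real mat"
  assumes M: "M \<in> carrier_mat m n" and B: "B \<in> carrier_mat n n"
    and no_gain: "\<not> vec_space.rank m M < vec_space.rank (m + m) (M @\<^sub>r (M * B))"
    and w: "w \<in> carrier_vec n" "map_mat complex_of_real M *\<^sub>v w = 0\<^sub>v m"
  shows "map_mat complex_of_real M *\<^sub>v (map_mat complex_of_real B *\<^sub>v w) = 0\<^sub>v m"
proof -
  have "M * B *\<^sub>v x = 0\<^sub>v m" if "x \<in> carrier_vec n" "M *\<^sub>v x = 0\<^sub>v m" for x
    using rank_append_rows_gt[of M m n "M * B" m x] M B that no_gain by auto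
  then have "map_mat complex_of_real (M * B) *\<^sub>v w = 0\<^sub>v m"
    using of_real_mat_kernel_mono[OF M _ _ w] M B by auto
  then show ?thesis
    using M B w(1) by (simp add: of_real_hom.mat_hom_mult[of _ m n _ n] assoc_mult_mat_vec[of _ m n _ n])
qed

lemma of_real_mat_kernel_nontrivial:
  fixes M :: "real mat"
  assumes M: "M \<in> carrier_mat n n" and "vec_space.rank n M < n"
  obtains z where "z \<in> carrier_vec n" "z \<noteq> 0\<^sub>v n" "map_mat complex_of_real M *\<^sub>v z = 0\<^sub>v n"
proof -
  have "det M = 0"
    using vec_space.det_rank_iff[OF M] assms(2) by simp
  then obtain x where "x \<in> carrier_vec n" "x \<noteq> 0\<^sub>v n" "M *\<^sub>v x = 0\<^sub>v n"
    using det_0_iff_vec_prod_zero[OF M] by blast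
  then show thesis
    using that[of "map_vec complex_of_real x"] M
    by (auto simp: of_real_hom.mult_mat_vec_hom[symmetric])
qed

lemma sample_obs_mat_carrier [simp]:
  "sample_obs_mat n C A ts \<in> carrier_mat (length ts) n"
  "dim_row (sample_obs_mat n C A ts) = length ts"
  "dim_col (sample_obs_mat n C A ts) = n"
  unfolding sample_obs_mat_def using mat_of_rows_carrier[of n "map (out_row C A) ts"] by simp_all

lemma sample_obs_mat_append:
  "sample_obs_mat n C A (ss @ ts) = sample_obs_mat n C A ss @\<^sub>r sample_obs_mat n C A ts"
  by (intro eq_matI) (auto simp: sample_obs_mat_def append_rows_def mat_of_rows_index nth_append)

lemma sample_obs_mat_index:
  assumes "C \<in> carrier_mat 1 n" and "A \<in> carrier_mat n n" and "i < length ts" and "j < n"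
  shows "sample_obs_mat n C A ts $$ (i, j) = (C * A ^\<^sub>m (ts ! i)) $$ (0, j)"
  using assms mult_carrier_mat[OF assms(1) pow_carrier_mat[OF assms(2)], of "ts ! i"]
  by (simp add: sample_obs_mat_def mat_of_rows_index out_row_def)

lemma sample_obs_mat_shift:
  assumes C: "C \<in> carrier_mat 1 n" and A: "A \<in> carrier_mat n n"
  shows "sample_obs_mat n C A (map (\<lambda>s. s + d) ts) = sample_obs_mat n C A ts * A ^\<^sub>m d"
proof (rule eq_matI)
  fix i j assume "i < dim_row (sample_obs_mat n C A ts * A ^\<^sub>m d)"
    "j < dim_col (sample_obs_mat n C A ts * A ^\<^sub>m d)"
  then have i: "i < length ts" and j: "j < n"
    using pow_carrier_mat[OF A, of d] by auto
  have "C * A ^\<^sub>m (ts ! i + d) = C * A ^\<^sub>m (ts ! i) * A ^\<^sub>m d"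
    using C A by (simp add: pow_mat_add[OF A] assoc_mult_mat[of _ 1 n _ n _ n])
  then show "sample_obs_mat n C A (map (\<lambda>s. s + d) ts) $$ (i, j)
      = (sample_obs_mat n C A ts * A ^\<^sub>m d) $$ (i, j)"
    using i j C A sample_obs_mat_carrier[of n C A ts]
    by (simp add: sample_obs_mat_index scalar_prod_def)
qed (use A in simp_all)

lemma of_real_sample_obs_mat_eigenvector:
  assumes C: "C \<in> carrier_mat 1 n" and A: "A \<in> carrier_mat n n"
    and y: "eigenvector (map_mat complex_of_real A) y a" and i: "i < length ts"
  shows "(map_mat complex_of_real (sample_obs_mat n C A ts) *\<^sub>v y) $ i
    = a ^ (ts ! i) * (map_mat complex_of_real C *\<^sub>v y) $ 0"
proof -
  let ?Cc = "map_mat complex_of_real C" and ?Ac = "map_mat complex_of_real A"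
  have Cc: "?Cc \<in> carrier_mat 1 n" and Ac: "?Ac \<in> carrier_mat n n" and y_car: "y \<in> carrier_vec n"
    using C A y by (auto simp: eigenvector_def)
  have hom: "?Cc * ?Ac ^\<^sub>m (ts ! i) = map_mat complex_of_real (C * A ^\<^sub>m (ts ! i))"
    using C A by (simp add: of_real_hom.mat_hom_mult[of _ 1 n _ n] of_real_hom.mat_hom_pow)
  have "(map_mat complex_of_real (sample_obs_mat n C A ts) *\<^sub>v y) $ i
      = ((?Cc * ?Ac ^\<^sub>m (ts ! i)) *\<^sub>v y) $ 0"
    unfolding hom using C A i y_car sample_obs_mat_carrier[of n C A ts]
    by (auto simp: scalar_prod_def sample_obs_mat_index intro!: sum.cong)
  also have "\<dots> = (?Cc *\<^sub>v (a ^ (ts ! i) \<cdot>\<^sub>v y)) $ 0"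
    using Cc Ac y_car eigenvector_pow[OF Ac y] by (simp add: assoc_mult_mat_vec[of _ 1 n _ n])
  also have "\<dots> = a ^ (ts ! i) * (?Cc *\<^sub>v y) $ 0"
    using Cc y_car by (simp add: mult_mat_vec)
  finally show ?thesis .
qed

lemma observable_eigenvector_output_nonzero:
  assumes C: "C \<in> carrier_mat 1 n" and A: "A \<in> carrier_mat n n" and obs: "observable n A C"
    and y: "eigenvector (map_mat complex_of_real A) y a"
  shows "(map_mat complex_of_real C *\<^sub>v y) $ 0 \<noteq> 0"
proof
  assume Cy: "(map_mat complex_of_real C *\<^sub>v y) $ 0 = 0"
  define Ob where "Ob = sample_obs_mat n C A [0..<n]"
  have Ob: "Ob \<in> carrier_mat n n"
    using sample_obs_mat_carrier[of n C A "[0..<n]"] by (simp add: Ob_def)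
  have y_car: "y \<in> carrier_vec n" "y \<noteq> 0\<^sub>v n"
    using y A by (auto simp: eigenvector_def)
  have "map_mat complex_of_real Ob *\<^sub>v y = 0\<^sub>v n"
  proof (rule eq_vecI)
    fix i assume "i < dim_vec (0\<^sub>v n :: complex vec)"
    then show "(map_mat complex_of_real Ob *\<^sub>v y) $ i = 0\<^sub>v n $ i"
      using of_real_sample_obs_mat_eigenvector[OF C A y, of i "[0..<n]"] Cy by (simp add: Ob_def)
  qed (use Ob in simp)
  then have "det (map_mat complex_of_real Ob) = 0"
    using det_0_iff_vec_prod_zero[of "map_mat complex_of_real Ob" n] Ob y_car by auto
  moreover have "det Ob \<noteq> 0"
    using vec_space.det_rank_iff[OF Ob] obs by (simp add: observable_def Ob_def)
  ultimately show False
    by (simp add: of_real_hom.hom_det)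
qed

theorem lemma5:
  fixes n :: nat and A C :: "real mat" and t :: "nat \<Rightarrow> nat" and \<Delta> :: nat
  assumes "n \<ge> 1"
    and "A \<in> carrier_mat n n" and "C \<in> carrier_mat 1 n"
    and "observable n A C"
    and "\<forall>lam. ceigenvalue A lam \<longrightarrow> lam \<noteq> 0"
    and "mrank n (sample_obs_mat n C A (map t [0..<n])) < n"
    and "\<Delta> > 0" and "\<not> pathological A \<Delta>"
  shows "mrank (2 * n) (sample_obs_mat n C A (map t [0..<n] @ map (\<lambda>i. t i + \<Delta>) [0..<n]))
         > mrank n (sample_obs_mat n C A (map t [0..<n]))"
proof (rule ccontr)
  let ?Ac = "map_mat complex_of_real A"
  define M where "M = sample_obs_mat n C A (map t [0..<n])"
  let ?Mc = "map_mat complex_of_real M"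
  have M: "M \<in> carrier_mat n n"
    using sample_obs_mat_carrier(1)[of n C A "map t [0..<n]"] by (simp add: M_def)
  have Ac_pow: "?Ac ^\<^sub>m \<Delta> \<in> carrier_mat n n" and Mc: "?Mc \<in> carrier_mat n n"
    using assms(2) M by simp_all
  assume "\<not> ?thesis"
  then have no_gain: "\<not> mrank n M < mrank (n + n) (M @\<^sub>r (M * A ^\<^sub>m \<Delta>))"
    using assms(2,3)
    by (simp add: M_def mult_2 sample_obs_mat_append comp_def flip: sample_obs_mat_shift)
  obtain z where "z \<in> carrier_vec n" "z \<noteq> 0\<^sub>v n" "?Mc *\<^sub>v z = 0\<^sub>v n"
    using of_real_mat_kernel_nontrivial[OF M] assms(6) by (auto simp: M_def)
  moreover have "?Mc *\<^sub>v (?Ac ^\<^sub>m \<Delta> *\<^sub>v w) = 0\<^sub>v n" if "w \<in> carrier_vec n" "?Mc *\<^sub>v w = 0\<^sub>v n" for w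
    using kernel_invariant_if_rank_not_increased[OF M pow_carrier_mat[OF assms(2)] no_gain that]
      assms(2) by (simp add: of_real_hom.mat_hom_pow)
  ultimately obtain y \<mu> where y: "?Mc *\<^sub>v y = 0\<^sub>v n" "eigenvector (?Ac ^\<^sub>m \<Delta>) y \<mu>"
    using invariant_kernel_eigenvector[OF Ac_pow Mc] by blast
  then obtain a where "a \<noteq> 0" and a: "eigenvector ?Ac y a"
    using nonpathological_pow_eigenvector[OF assms(2,5,7,8)] by blast
  have "(?Mc *\<^sub>v y) $ 0 = a ^ t 0 * (map_mat complex_of_real C *\<^sub>v y) $ 0"
    using of_real_sample_obs_mat_eigenvector[OF assms(3,2) a, of 0 "map t [0..<n]"] assms(1)
    by (simp add: M_def)
  then show False
    using y(1) observable_eigenvector_output_nonzero[OF assms(3,2,4) a] \<open>a \<noteq> 0\<close> assms(1) by simp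
qed

end
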